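(* Let $n$ be even and $1\le\kappa<n$. Let $\mathcal{C}_1\subseteq\{0,1\}^n$ be the set of all balanced binary sequences of length $n$ (so $|\mathcal{C}_1|=\binom{n}{n/2}$) and let $\mathcal{C}_2\subseteq\{0,1\}^n$ be a $\kappa$-WMU code. Let $\mathcal{C}=\{\Psi(\mathbf{a},\mathbf{b}):\mathbf{a}\in\mathcal{C}_1,\mathbf{b}\in\mathcal{C}_2\}\subseteq\{\mathtt{A},\mathtt{T},\mathtt{C},\mathtt{G}\}^n$. Then $\mathcal{C}$ is a $\kappa$-WMU code and $\mathcal{C}$ is balanced.
   Context: $\Psi(\mathbf{a},\mathbf{b})=(c_1,\dots,c_n)$ with $c_i=\mathtt{A},\mathtt{T},\mathtt{C},\mathtt{G}$ according as $(a_i,b_i)=(0,0),(0,1),(1,0),(1,1)$. A binary sequence of length $n$ is balanced if exactly $n/2$ entries are $1$; a DNA sequence of length $n$ is balanced if exactly $n/2$ entries lie in $\{\mathtt{G},\mathtt{C}\}$; a code is balanced if every codeword is. A code $\mathcal{C}$ of length $n$ over an alphabet is $\kappa$-WMU if for all not necessarily distinct $\mathbf{a},\mathbf{b}\in\mathcal{C}$ and all $\kappa\le l<n$, $(a_1,\dots,a_l)\ne(b_{n-l+1},\dots,b_n)$. *)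

theory Defs
  imports Main
begin

datatype dna = A | T | C | G

definition psi_sym :: "bool \<Rightarrow> bool \<Rightarrow> dna" where
  "psi_sym a b = (if \<not> a \<and> \<not> b then A else if \<not> a \<and> b then T
                  else if a \<and> \<not> b then C else G)"

text \<open>Psi(a,b) for binary sequences of the same length (bits encoded as bool, 1 = True).\<close>
definition Psi :: "bool list \<Rightarrow> bool list \<Rightarrow> dna list" where
  "Psi a b = map2 psi_sym a b"

definition balanced_bin :: "nat \<Rightarrow> bool list \<Rightarrow> bool" where
  "balanced_bin n x \<longleftrightarrow> length x = n \<and> 2 * length (filter id x) = n"

definition balanced_dna :: "nat \<Rightarrow> dna list \<Rightarrow> bool" where
  "balanced_dna n x \<longleftrightarrow> length x = n \<and> 2 * length (filter (\<lambda>c. c \<in> {G, C}) x) = n"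

definition balanced_code :: "nat \<Rightarrow> dna list set \<Rightarrow> bool" where
  "balanced_code n Cd \<longleftrightarrow> (\<forall>x\<in>Cd. balanced_dna n x)"

definition WMU :: "nat \<Rightarrow> nat \<Rightarrow> 'a list set \<Rightarrow> bool" where
  "WMU \<kappa> n Cd \<longleftrightarrow> (\<forall>x\<in>Cd. length x = n) \<and>
     (\<forall>a\<in>Cd. \<forall>b\<in>Cd. \<forall>l. \<kappa> \<le> l \<and> l < n \<longrightarrow> take l a \<noteq> drop (n - l) b)"

end

theory Submission
  imports Defs
begin

text \<open>Projecting a DNA codeword \<open>\<Psi>(a, b)\<close> symbolwise to its second bit recovers \<open>b\<close>.
  Because a coincidence of a prefix with a suffix survives any symbolwise map, the WMU property descends from the projected
  code \<open>\<C>\<^sub>2\<close> to \<open>\<C>\<close>. The symbols \<open>G, C\<close> are exactly those with first bit \<open>1\<close>, so the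
  GC-content of \<open>\<Psi>(a, b)\<close> is the weight of \<open>a\<close>.\<close>

definition second_bit :: "dna \<Rightarrow> bool" where
  "second_bit c \<longleftrightarrow> c = T \<or> c = G"

lemma second_bit_psi_sym [simp]: "second_bit (psi_sym a b) = b"
  by (auto simp: second_bit_def psi_sym_def)

lemma length_Psi: "length (Psi a b) = min (length a) (length b)"
  by (simp add: Psi_def)

lemma map_second_bit_Psi:
  "length a = length b \<Longrightarrow> map second_bit (Psi a b) = b"
  by (induction a b rule: list_induct2) (simp_all add: Psi_def)

lemma length_filter_GC_Psi:
  "length a = length b \<Longrightarrow>
   length (filter (\<lambda>c. c \<in> {G, C}) (Psi a b)) = length (filter id a)"
  by (induction a b rule: list_induct2) (auto simp: Psi_def psi_sym_def)

lemma balanced_dna_Psi: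
  "balanced_bin n a \<Longrightarrow> length b = n \<Longrightarrow> balanced_dna n (Psi a b)"
  using length_filter_GC_Psi[of a b]
  by (simp add: balanced_bin_def balanced_dna_def length_Psi del: insert_iff)

lemma WMU_subset: "WMU \<kappa> n Cd \<Longrightarrow> Cd' \<subseteq> Cd \<Longrightarrow> WMU \<kappa> n Cd'"
  unfolding WMU_def by blast

lemma WMU_if_WMU_map:
  assumes "WMU \<kappa> n (map f ` Cd)" and "\<forall>x\<in>Cd. length x = n"
  shows "WMU \<kappa> n Cd"
  unfolding WMU_def
proof (intro conjI assms(2) ballI allI impI notI)
  fix x y l
  assume "x \<in> Cd" "y \<in> Cd" "\<kappa> \<le> l \<and> l < n" and eq: "take l x = drop (n - l) y"
  moreover have "take l (map f x) = drop (n - l) (map f y)"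
    using arg_cong[OF eq, of "map f"] by (simp add: take_map drop_map)
  ultimately show False
    using assms(1) unfolding WMU_def by blast
qed

theorem lemma4:
  fixes n \<kappa> :: nat and C2 :: "bool list set"
  assumes "even n" and "1 \<le> \<kappa>" and "\<kappa> < n"
    and "WMU \<kappa> n C2"
  defines "C1 \<equiv> {x. balanced_bin n x}"
  defines "Cd \<equiv> {Psi a b | a b. a \<in> C1 \<and> b \<in> C2}"
  shows "WMU \<kappa> n Cd \<and> balanced_code n Cd"
proof -
  have length_C2: "\<forall>b\<in>C2. length b = n"
    using assms(4) by (simp add: WMU_def)
  have length_C1: "\<forall>a\<in>C1. length a = n"
    by (simp add: C1_def balanced_bin_def)
  have "map second_bit ` Cd \<subseteq> C2"
    using length_C1 length_C2 by (auto simp: Cd_def map_second_bit_Psi)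
  then have "WMU \<kappa> n (map second_bit ` Cd)"
    by (rule WMU_subset[OF assms(4)])
  moreover have "\<forall>x\<in>Cd. length x = n"
    using length_C1 length_C2 by (auto simp: Cd_def length_Psi)
  moreover have "balanced_code n Cd"
    using length_C2 by (auto simp: Cd_def C1_def balanced_code_def balanced_dna_Psi)
  ultimately show ?thesis
    using WMU_if_WMU_map by blast
qed

end
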